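(* Let $\Sigma$ be a signature and consider judgements in $\mathcal{J}(\Sigma)$. Let $\Delta = y_1:B_1,\ldots,y_n:B_n$ be a context. (a) If $(a:A\ (\Delta))\in\mathcal{J}(\Sigma)$ and $(a:A'\ (\Delta))\in\mathcal{J}(\Sigma)$, then $A\equiv A'$. (b) If $(a_1,\ldots,a_n):\Gamma\to\Delta$ and $(b_1,\ldots,b_n):\Gamma\to\Delta$ are context maps in $\mathcal{J}(\Sigma)$ such that $a_i\equiv b_i$ for every $i$ with $y_i\in \mathrm{TV}(\Delta)$, then $a_i\equiv b_i$ for all $i=1,\ldots,n$.
   Context: Fix an infinite set $V$ of variables with decidable equality, and a fresh variable provider: functions $\varphi,\mathsf{fr}$ assigning to each finite $X\subseteq V$ an inhabited subset $\varphi(X)\subseteq V\setminus X$ and an element $\mathsf{fr}(X)\in\varphi(X)$. Fix disjoint sets $F$ (function symbols) and $T$ (type symbols) with decidable equality. Preelements are terms built from variables and symbols of $F$; a pretype is $S(t_1,\ldots,t_n)$ with $S\in T$ and $t_i$ preelements. $\mathrm{V}(E)$ is the set of variables of an expression $E$, $\equiv$ is syntactic identity, and $E[\bar a/\bar x]$ is simultaneous substitution. A precontext is a sequence $\Gamma=x_1:A_1,\ldots,x_n:A_n$ of pretypes with $x_k\in\varphi(\{x_1,\ldots,x_{k-1}\})$ and $\mathrm{V}(A_k)\subseteq\{x_1,\ldots,x_{k-1}\}$; $\mathrm{OV}(\Gamma)=x_1,\ldots,x_n$, $\mathrm{V}(\Gamma)=\{x_1,\ldots,x_n\}$, $\mathrm{Fresh}(\Gamma)=\varphi(\mathrm{V}(\Gamma))$,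 $\mathrm{fresh}(\Gamma)=\mathsf{fr}(\mathrm{V}(\Gamma))$, $E[\bar a/\Gamma]=E[\bar a/x_1,\ldots,x_n]$. Top variables: $\mathrm{TV}(\langle\rangle)=\emptyset$, $\mathrm{TV}(\Gamma,x:A)=(\mathrm{TV}(\Gamma)\setminus\mathrm{V}(A))\cup\{x\}$. A determining sequence for $\Gamma$ is a strictly increasing $\bar i=i_1,\ldots,i_k$ in $\{1,\ldots,n\}$ with $\mathrm{TV}(\Gamma)\subseteq\{x_{i_1},\ldots,x_{i_k}\}$; for $\bar a=a_1,\ldots,a_n$ put $\bar a_{\bar i}=a_{i_1},\ldots,a_{i_k}$. A type predeclaration is $(\Gamma,S,\bar i)$ with $S\in T$, $\bar i$ determining; a function predeclaration is $(\Gamma,f,\bar i,U)$ with $f\in F$, $\bar i$ determining, $U$ a pretype with $\mathrm{V}(U)\subseteq\mathrm{V}(\Gamma)$. A presignature is a set $\Sigma$ of predeclarations with no symbol declared twice. Judgements are "$\Gamma$ context", "$A$ type $(\Gamma)$", "$a:A\ (\Gamma)$". $\mathcal{J}(\Sigma)$ is the smallest set of judgements closed under: (R1) $\langle\rangle$ context; (R2) from $\Gamma$ context and $A$ type $(\Gamma)$ infer $\Gamma,x:A$ context, for $x\in\mathrm{Fresh}(\Gamma)$; (R3) from $x_1:A_1,\ldots,x_n:A_n$ context infer $x_i:A_i\ (x_1:A_1,\ldots,x_n:A_n)$; (R4) if $(\Gamma,S,\bar i)\in\Sigma$ and $\bar a:\Delta\to\Gamma$, infer $S(\bar a_{\bar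 i})$ type $(\Delta)$; (R5) if $(\Gamma,f,\bar i,U)\in\Sigma$, $\bar a:\Delta\to\Gamma$ and $U[\bar a/\Gamma]$ type $(\Delta)$, infer $f(\bar a_{\bar i}):U[\bar a/\Gamma]\ (\Delta)$. Here, for $\Gamma=x_1:A_1,\ldots,x_n:A_n$, the context map "$\bar a:\Delta\to\Gamma$" abbreviates the $n+2$ judgements $\Delta$ context, $\Gamma$ context, and $a_k:A_k[a_1,\ldots,a_{k-1}/x_1,\ldots,x_{k-1}]\ (\Delta)$ for $k=1,\ldots,n$. $\Sigma$ is a signature if ($\Gamma$ context)$\in\mathcal{J}(\Sigma)$ whenever $(\Gamma,S,\bar i)\in\Sigma$, and ($U$ type $(\Gamma)$)$\in\mathcal{J}(\Sigma)$ whenever $(\Gamma,f,\bar i,U)\in\Sigma$. *)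

theory Defs
  imports Main
begin

text \<open>Variables have type 'v, function symbols type 'f, type symbols type 't
  (so F and T are disjoint by construction; equality is decidable in HOL).\<close>

datatype ('v, 'f) pre = Var 'v | App 'f "('v, 'f) pre list"

datatype ('v, 'f, 't) pretype = TApp 't "('v, 'f) pre list"

fun varsP :: "('v, 'f) pre \<Rightarrow> 'v set" where
  "varsP (Var x) = {x}"
| "varsP (App f ts) = \<Union> (set (map varsP ts))"

fun varsT :: "('v, 'f, 't) pretype \<Rightarrow> 'v set" where
  "varsT (TApp S ts) = \<Union> (set (map varsP ts))"

fun substP :: "('v \<Rightarrow> ('v, 'f) pre) \<Rightarrow> ('v, 'f) pre \<Rightarrow> ('v, 'f) pre" where
  "substP \<sigma> (Var x) = \<sigma> x"
| "substP \<sigma> (App f ts) = App f (map (substP \<sigma>) ts)"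

fun substT :: "('v \<Rightarrow> ('v, 'f) pre) \<Rightarrow> ('v, 'f, 't) pretype \<Rightarrow> ('v, 'f, 't) pretype" where
  "substT \<sigma> (TApp S ts) = TApp S (map (substP \<sigma>) ts)"

text \<open>Simultaneous substitution E[a1..an / x1..xn] (the variables x_i are distinct in
  all uses below; if not, the first occurrence wins).\<close>
definition sb :: "'v list \<Rightarrow> ('v, 'f) pre list \<Rightarrow> 'v \<Rightarrow> ('v, 'f) pre" where
  "sb xs as v = (case map_of (zip xs as) v of Some a \<Rightarrow> a | None \<Rightarrow> Var v)"

definition substTL :: "'v list \<Rightarrow> ('v, 'f) pre list \<Rightarrow> ('v, 'f, 't) pretype \<Rightarrow> ('v, 'f, 't) pretype" where
  "substTL xs as A = substT (sb xs as) A"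

type_synonym ('v, 'f, 't) ctx = "('v \<times> ('v, 'f, 't) pretype) list"

definition OV :: "('v, 'f, 't) ctx \<Rightarrow> 'v list" where
  "OV \<Gamma> = map fst \<Gamma>"

definition VC :: "('v, 'f, 't) ctx \<Rightarrow> 'v set" where
  "VC \<Gamma> = set (map fst \<Gamma>)"

definition precontext :: "('v set \<Rightarrow> 'v set) \<Rightarrow> ('v, 'f, 't) ctx \<Rightarrow> bool" where
  "precontext \<phi> \<Gamma> \<longleftrightarrow> (\<forall>k < length \<Gamma>.
      fst (\<Gamma> ! k) \<in> \<phi> (set (take k (OV \<Gamma>))) \<and>
      varsT (snd (\<Gamma> ! k)) \<subseteq> set (take k (OV \<Gamma>)))"

fun TVrev :: "('v \<times> ('v, 'f, 't) pretype) list \<Rightarrow> 'v set" where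
  "TVrev [] = {}"
| "TVrev ((x, A) # G) = (TVrev G - varsT A) \<union> {x}"

definition TV :: "('v, 'f, 't) ctx \<Rightarrow> 'v set" where
  "TV \<Gamma> = TVrev (rev \<Gamma>)"

text \<open>Determining sequences use the paper's 1-based indices i in {1..n}.\<close>
definition determining :: "('v, 'f, 't) ctx \<Rightarrow> nat list \<Rightarrow> bool" where
  "determining \<Gamma> is \<longleftrightarrow> sorted_wrt (<) is \<and> set is \<subseteq> {1..length \<Gamma>} \<and>
     TV \<Gamma> \<subseteq> (\<lambda>i. fst (\<Gamma> ! (i - 1))) ` set is"

definition sel :: "nat list \<Rightarrow> 'a list \<Rightarrow> 'a list" where
  "sel is as = map (\<lambda>i. as ! (i - 1)) is"

datatype ('v, 'f, 't) decl =
    TDecl "('v, 'f, 't) ctx" 't "nat list"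
  | FDecl "('v, 'f, 't) ctx" 'f "nat list" "('v, 'f, 't) pretype"

fun decl_sym :: "('v, 'f, 't) decl \<Rightarrow> 't + 'f" where
  "decl_sym (TDecl _ S _) = Inl S"
| "decl_sym (FDecl _ f _ _) = Inr f"

fun predecl :: "('v set \<Rightarrow> 'v set) \<Rightarrow> ('v, 'f, 't) decl \<Rightarrow> bool" where
  "predecl \<phi> (TDecl \<Gamma> S is) \<longleftrightarrow> precontext \<phi> \<Gamma> \<and> determining \<Gamma> is"
| "predecl \<phi> (FDecl \<Gamma> f is U) \<longleftrightarrow> precontext \<phi> \<Gamma> \<and> determining \<Gamma> is \<and> varsT U \<subseteq> VC \<Gamma>"

definition presignature :: "('v set \<Rightarrow> 'v set) \<Rightarrow> ('v, 'f, 't) decl set \<Rightarrow> bool" where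
  "presignature \<phi> \<Sigma> \<longleftrightarrow> (\<forall>d \<in> \<Sigma>. predecl \<phi> d) \<and>
     (\<forall>d1 \<in> \<Sigma>. \<forall>d2 \<in> \<Sigma>. decl_sym d1 = decl_sym d2 \<longrightarrow> d1 = d2)"

datatype ('v, 'f, 't) judg =
    Ctx "('v, 'f, 't) ctx"
  | Ty "('v, 'f, 't) ctx" "('v, 'f, 't) pretype"
  | El "('v, 'f, 't) ctx" "('v, 'f) pre" "('v, 'f, 't) pretype"

text \<open>The n+2 judgements abbreviated by the context map  as : Delta -> Gamma.\<close>
definition cmap :: "('v, 'f, 't) judg set \<Rightarrow> ('v, 'f) pre list \<Rightarrow> ('v, 'f, 't) ctx \<Rightarrow> ('v, 'f, 't) ctx \<Rightarrow> bool" where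
  "cmap J as \<Delta> \<Gamma> \<longleftrightarrow> Ctx \<Delta> \<in> J \<and> Ctx \<Gamma> \<in> J \<and> length as = length \<Gamma> \<and>
     (\<forall>k < length \<Gamma>. El \<Delta> (as ! k) (substTL (take k (OV \<Gamma>)) (take k as) (snd (\<Gamma> ! k))) \<in> J)"

inductive_set J :: "('v set \<Rightarrow> 'v set) \<Rightarrow> ('v, 'f, 't) decl set \<Rightarrow> ('v, 'f, 't) judg set"
  for \<phi> :: "'v set \<Rightarrow> 'v set" and \<Sigma> :: "('v, 'f, 't) decl set" where
  R1: "Ctx [] \<in> J \<phi> \<Sigma>"
| R2: "\<lbrakk> Ctx \<Gamma> \<in> J \<phi> \<Sigma>; Ty \<Gamma> A \<in> J \<phi> \<Sigma>; x \<in> \<phi> (VC \<Gamma>) \<rbrakk> \<Longrightarrow> Ctx (\<Gamma> @ [(x, A)]) \<in> J \<phi> \<Sigma>"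
| R3: "\<lbrakk> Ctx \<Gamma> \<in> J \<phi> \<Sigma>; i < length \<Gamma> \<rbrakk> \<Longrightarrow> El \<Gamma> (Var (fst (\<Gamma> ! i))) (snd (\<Gamma> ! i)) \<in> J \<phi> \<Sigma>"
| R4: "\<lbrakk> TDecl \<Gamma> S is \<in> \<Sigma>; Ctx \<Delta> \<in> J \<phi> \<Sigma>; Ctx \<Gamma> \<in> J \<phi> \<Sigma>; length as = length \<Gamma>;
        \<forall>k < length \<Gamma>. El \<Delta> (as ! k) (substTL (take k (OV \<Gamma>)) (take k as) (snd (\<Gamma> ! k))) \<in> J \<phi> \<Sigma> \<rbrakk>
       \<Longrightarrow> Ty \<Delta> (TApp S (sel is as)) \<in> J \<phi> \<Sigma>"
| R5: "\<lbrakk> FDecl \<Gamma> f is U \<in> \<Sigma>; Ctx \<Delta> \<in> J \<phi> \<Sigma>; Ctx \<Gamma> \<in> J \<phi> \<Sigma>; length as = length \<Gamma>;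
        \<forall>k < length \<Gamma>. El \<Delta> (as ! k) (substTL (take k (OV \<Gamma>)) (take k as) (snd (\<Gamma> ! k))) \<in> J \<phi> \<Sigma>;
        Ty \<Delta> (substTL (OV \<Gamma>) as U) \<in> J \<phi> \<Sigma> \<rbrakk>
       \<Longrightarrow> El \<Delta> (App f (sel is as)) (substTL (OV \<Gamma>) as U) \<in> J \<phi> \<Sigma>"

lemma R4_R5_are_cmap:
  "cmap (J \<phi> \<Sigma>) as \<Delta> \<Gamma> \<longleftrightarrow> Ctx \<Delta> \<in> J \<phi> \<Sigma> \<and> Ctx \<Gamma> \<in> J \<phi> \<Sigma> \<and> length as = length \<Gamma> \<and>
     (\<forall>k < length \<Gamma>. El \<Delta> (as ! k) (substTL (take k (OV \<Gamma>)) (take k as) (snd (\<Gamma> ! k))) \<in> J \<phi> \<Sigma>)"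
  by (simp add: cmap_def)

definition signature :: "('v set \<Rightarrow> 'v set) \<Rightarrow> ('v, 'f, 't) decl set \<Rightarrow> bool" where
  "signature \<phi> \<Sigma> \<longleftrightarrow> presignature \<phi> \<Sigma> \<and>
     (\<forall>\<Gamma> S is. TDecl \<Gamma> S is \<in> \<Sigma> \<longrightarrow> Ctx \<Gamma> \<in> J \<phi> \<Sigma>) \<and>
     (\<forall>\<Gamma> f is U. FDecl \<Gamma> f is U \<in> \<Sigma> \<longrightarrow> Ty \<Gamma> U \<in> J \<phi> \<Sigma>)"

definition fresh_provider :: "('v set \<Rightarrow> 'v set) \<Rightarrow> ('v set \<Rightarrow> 'v) \<Rightarrow> bool" where
  "fresh_provider \<phi> fr \<longleftrightarrow> (\<forall>X. finite X \<longrightarrow> \<phi> X \<subseteq> - X \<and> fr X \<in> \<phi> X)"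

end

theory Submission
  imports Defs
begin

text \<open>
  A variable x_i of a context that is not a top variable occurs in the type of some later entry
  x_k : A_k. Given two context maps into the context that agree on the top variables, descending
  induction on i shows they agree on x_i: inductively a_k = b_k, and since a term has at most
  one type, A_k[a_1..a_{k-1}] = A_k[b_1..b_{k-1}], which forces a_i = b_i.
  Uniqueness of types is proved by rule induction: variables have the type recorded in the
  context (whose variables are distinct by freshness), and for f(a_{i_1},...,a_{i_m}) the
  declaration of f is unique and the determining sequence covers the top variables, so the same
  argument recovers all arguments, hence the type U[a/Gamma].
\<close>

lemma substP_eq_imp_agree_on_vars:
  "substP \<sigma> t = substP \<tau> t \<Longrightarrow> x \<in> varsP t \<Longrightarrow> \<sigma> x = \<tau> x"
  by (induction t) auto

lemma substT_eq_imp_agree_on_vars: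
  "substT \<sigma> B = substT \<tau> B \<Longrightarrow> x \<in> varsT B \<Longrightarrow> \<sigma> x = \<tau> x"
  by (cases B) (auto intro: substP_eq_imp_agree_on_vars)

lemma sb_nth: "distinct xs \<Longrightarrow> length as = length xs \<Longrightarrow> i < length xs \<Longrightarrow> sb xs as (xs ! i) = as ! i"
  by (simp add: sb_def map_of_zip_nth)

lemma substTL_eq_imp_nth_eq:
  assumes "substTL xs as B = substTL xs bs B" and "distinct xs"
    and "length as = length xs" and "length bs = length xs"
    and "i < length xs" and "xs ! i \<in> varsT B"
  shows "as ! i = bs ! i"
proof -
  have "sb xs as (xs ! i) = sb xs bs (xs ! i)"
    using assms(1,6) unfolding substTL_def by (rule substT_eq_imp_agree_on_vars)
  then show ?thesis using assms(2-5) by (simp add: sb_nth)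
qed

lemma not_top_var_occurs_later:
  assumes "i < length \<Delta>" and "fst (\<Delta> ! i) \<notin> TV \<Delta>"
  shows "\<exists>k < length \<Delta>. i < k \<and> fst (\<Delta> ! i) \<in> varsT (snd (\<Delta> ! k))"
  using assms
proof (induction \<Delta> arbitrary: i rule: rev_induct)
  case Nil
  then show ?case by simp
next
  case (snoc p \<Delta>)
  obtain y B where p: "p = (y, B)" by (cases p)
  have TV_snoc: "TV (\<Delta> @ [p]) = (TV \<Delta> - varsT B) \<union> {y}" by (simp add: TV_def p)
  show ?case
  proof (cases "i < length \<Delta>")
    case True
    then have x: "fst ((\<Delta> @ [p]) ! i) = fst (\<Delta> ! i)" by (simp add: nth_append)
    show ?thesis
    proof (cases "fst (\<Delta> ! i) \<in> varsT B")
      case True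
      then show ?thesis using \<open>i < length \<Delta>\<close> x by (intro exI[of _ "length \<Delta>"]) (simp add: p)
    next
      case False
      then have "fst (\<Delta> ! i) \<notin> TV \<Delta>" using snoc.prems(2) x TV_snoc by auto
      then obtain k where "k < length \<Delta>" "i < k" "fst (\<Delta> ! i) \<in> varsT (snd (\<Delta> ! k))"
        using snoc.IH \<open>i < length \<Delta>\<close> by blast
      then show ?thesis using x by (intro exI[of _ k]) (simp add: nth_append)
    qed
  next
    case False
    then have "i = length \<Delta>" using snoc.prems(1) by simp
    then show ?thesis using snoc.prems(2) TV_snoc by (simp add: p)
  qed
qed

text \<open>With 0-based k, this is the paper's A_{k+1}[a_1,...,a_k/x_1,...,x_k].\<close>
abbreviation inst_entry :: "('v, 'f, 't) ctx \<Rightarrow> ('v, 'f) pre list \<Rightarrow> nat \<Rightarrow> ('v, 'f, 't) pretype" where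
  "inst_entry \<Delta> as k \<equiv> substTL (take k (OV \<Delta>)) (take k as) (snd (\<Delta> ! k))"

lemma entries_determined_by_top_vars:
  fixes E :: "('v, 'f) pre \<Rightarrow> ('v, 'f, 't) pretype \<Rightarrow> bool" and \<Delta> :: "('v, 'f, 't) ctx"
  assumes "distinct (OV \<Delta>)" and "length as = length \<Delta>" and "length bs = length \<Delta>"
    and as_unique: "\<And>k A. k < length \<Delta> \<Longrightarrow> E (as ! k) A \<Longrightarrow> A = inst_entry \<Delta> as k"
    and bs_typed: "\<And>k. k < length \<Delta> \<Longrightarrow> E (bs ! k) (inst_entry \<Delta> bs k)"
    and top: "\<And>i. i < length \<Delta> \<Longrightarrow> fst (\<Delta> ! i) \<in> TV \<Delta> \<Longrightarrow> as ! i = bs ! i"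
    and "i < length \<Delta>"
  shows "as ! i = bs ! i"
  using \<open>i < length \<Delta>\<close>
proof (induction "length \<Delta> - i" arbitrary: i rule: less_induct)
  case less
  show ?case
  proof (cases "fst (\<Delta> ! i) \<in> TV \<Delta>")
    case True
    then show ?thesis using top less.prems by blast
  next
    case False
    then obtain k where k: "k < length \<Delta>" "i < k" "fst (\<Delta> ! i) \<in> varsT (snd (\<Delta> ! k))"
      using not_top_var_occurs_later less.prems by blast
    have "as ! k = bs ! k" using less.hyps k by simp
    then have "inst_entry \<Delta> as k = inst_entry \<Delta> bs k"
      using as_unique bs_typed k(1) by metis
    moreover have "take k (OV \<Delta>) ! i = fst (\<Delta> ! i)" using k by (simp add: OV_def)
    ultimately have "take k as ! i = take k bs ! i"
      using substTL_eq_imp_nth_eq[of "take k (OV \<Delta>)" "take k as" _ "take k bs" i] assms(1-3) k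
      by (simp add: OV_def)
    then show ?thesis using k(2) by simp
  qed
qed

lemma distinct_OV_if_Ctx:
  assumes "fresh_provider \<phi> fr" and "Ctx \<Gamma> \<in> J \<phi> \<Sigma>"
  shows "distinct (OV \<Gamma>)"
proof -
  have "j \<in> J \<phi> \<Sigma> \<Longrightarrow> (case j of Ctx \<Gamma> \<Rightarrow> distinct (OV \<Gamma>) | _ \<Rightarrow> True)" for j
  proof (induction j rule: J.induct)
    case (R2 \<Gamma> A x)
    have "\<phi> (VC \<Gamma>) \<subseteq> - VC \<Gamma>"
      using assms(1) unfolding fresh_provider_def VC_def by simp
    then show ?case using R2 by (auto simp: OV_def VC_def)
  qed (simp_all add: OV_def)
  from this[OF assms(2)] show ?thesis by simp
qed

lemma sel_eq_imp_top_entries_eq: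
  assumes "determining \<Gamma> is" and "distinct (OV \<Gamma>)" and "sel is as = sel is bs"
    and "i < length \<Gamma>" and "fst (\<Gamma> ! i) \<in> TV \<Gamma>"
  shows "as ! i = bs ! i"
proof -
  obtain j where j: "j \<in> set is" "1 \<le> j" "j \<le> length \<Gamma>" "fst (\<Gamma> ! i) = fst (\<Gamma> ! (j - 1))"
    using assms(1,5) unfolding determining_def by fastforce
  have "i = j - 1"
    using nth_eq_iff_index_eq[OF assms(2), of i "j - 1"] assms(4) j by (simp add: OV_def)
  moreover have "as ! (j - 1) = bs ! (j - 1)"
    using assms(3) j(1) by (simp add: sel_def)
  ultimately show ?thesis by simp
qed

lemma presignature_FDecl_unique:
  "presignature \<phi> \<Sigma> \<Longrightarrow> FDecl \<Gamma> f is U \<in> \<Sigma> \<Longrightarrow> FDecl \<Gamma>' f is' U' \<in> \<Sigma> \<Longrightarrow>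
    \<Gamma>' = \<Gamma> \<and> is' = is \<and> U' = U"
  unfolding presignature_def by (metis decl.inject(2) decl_sym.simps(2))

inductive_cases El_cases: "El \<Gamma> a A \<in> J \<phi> \<Sigma>"

lemma El_type_unique:
  assumes fp: "fresh_provider \<phi> fr" and ps: "presignature \<phi> \<Sigma>"
    and "El \<Gamma> a A \<in> J \<phi> \<Sigma>" and "El \<Gamma> a A' \<in> J \<phi> \<Sigma>"
  shows "A' = A"
proof -
  have "j \<in> J \<phi> \<Sigma> \<Longrightarrow>
      (case j of El \<Gamma> a A \<Rightarrow> \<forall>A'. El \<Gamma> a A' \<in> J \<phi> \<Sigma> \<longrightarrow> A' = A | _ \<Rightarrow> True)" for j
  proof (induction j rule: J.induct)
    case (R3 \<Gamma> i)
    have "A' = snd (\<Gamma> ! i)" if "El \<Gamma> (Var (fst (\<Gamma> ! i))) A' \<in> J \<phi> \<Sigma>" for A'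
      using that
    proof (rule El_cases)
      fix j assume "j < length \<Gamma>" "Var (fst (\<Gamma> ! i)) = Var (fst (\<Gamma> ! j))" "A' = snd (\<Gamma> ! j)"
      moreover have "distinct (OV \<Gamma>)" using distinct_OV_if_Ctx[OF fp R3.hyps(1)] .
      ultimately show ?thesis
        using nth_eq_iff_index_eq[of "OV \<Gamma>" i j] R3.hyps(2) by (simp add: OV_def)
    qed simp
    then show ?case by simp
  next
    case (R5 \<Gamma> f "is" U \<Delta> as)
    have "A' = substTL (OV \<Gamma>) as U" if "El \<Delta> (App f (sel is as)) A' \<in> J \<phi> \<Sigma>" for A'
      using that
    proof (rule El_cases)
      fix \<Gamma>' f' is' U' as'
      assume decl': "FDecl \<Gamma>' f' is' U' \<in> \<Sigma>" and len': "length as' = length \<Gamma>'"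
        and typed': "\<forall>k<length \<Gamma>'. El \<Delta> (as' ! k) (inst_entry \<Gamma>' as' k) \<in> J \<phi> \<Sigma>"
        and app: "App f (sel is as) = App f' (sel is' as')"
        and A': "A' = substTL (OV \<Gamma>') as' U'"
      have same: "\<Gamma>' = \<Gamma>" "is' = is" "U' = U"
        using presignature_FDecl_unique[OF ps R5.hyps(1)] decl' app by auto
      have det: "determining \<Gamma> is"
        using ps R5.hyps(1) unfolding presignature_def by fastforce
      have dist: "distinct (OV \<Gamma>)" using distinct_OV_if_Ctx[OF fp R5.hyps(3)] .
      have "as ! i = as' ! i" if "i < length \<Gamma>" for i
        using dist R5.hyps(4) len'[unfolded same]
      proof (rule entries_determined_by_top_vars[where E = "\<lambda>a A. El \<Delta> a A \<in> J \<phi> \<Sigma>"])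
        show "\<And>k A. k < length \<Gamma> \<Longrightarrow> El \<Delta> (as ! k) A \<in> J \<phi> \<Sigma> \<Longrightarrow> A = inst_entry \<Gamma> as k"
          using R5.IH(3) by simp
        show "\<And>k. k < length \<Gamma> \<Longrightarrow> El \<Delta> (as' ! k) (inst_entry \<Gamma> as' k) \<in> J \<phi> \<Sigma>"
          using typed' same by simp
        show "\<And>i. i < length \<Gamma> \<Longrightarrow> fst (\<Gamma> ! i) \<in> TV \<Gamma> \<Longrightarrow> as ! i = as' ! i"
          using sel_eq_imp_top_entries_eq[OF det dist] app same by auto
      qed (rule that)
      then have "as' = as" using R5.hyps(4) len' same by (simp add: nth_equalityI)
      then show ?thesis using A' same by simp
    qed simp
    then show ?case by simp
  qed simp_all
  from this[OF assms(3)] assms(4) show ?thesis by simp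
qed

theorem mainTheorem1:
  fixes \<phi> :: "'v set \<Rightarrow> 'v set" and fr :: "'v set \<Rightarrow> 'v"
    and \<Sigma> :: "('v, 'f, 't) decl set" and \<Delta> :: "('v, 'f, 't) ctx"
  assumes "infinite (UNIV :: 'v set)"
    and "fresh_provider \<phi> fr"
    and "signature \<phi> \<Sigma>"
    and "Ctx \<Delta> \<in> J \<phi> \<Sigma>"
  shows "(\<forall>a A A'. El \<Delta> a A \<in> J \<phi> \<Sigma> \<and> El \<Delta> a A' \<in> J \<phi> \<Sigma> \<longrightarrow> A = A')
       \<and> (\<forall>\<Gamma> as bs. cmap (J \<phi> \<Sigma>) as \<Gamma> \<Delta> \<and> cmap (J \<phi> \<Sigma>) bs \<Gamma> \<Delta> \<and>
            (\<forall>i < length \<Delta>. fst (\<Delta> ! i) \<in> TV \<Delta> \<longrightarrow> as ! i = bs ! i)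
          \<longrightarrow> (\<forall>i < length \<Delta>. as ! i = bs ! i))"
proof -
  have ps: "presignature \<phi> \<Sigma>" using assms(3) unfolding signature_def by simp
  note unique = El_type_unique[OF assms(2) ps]
  have "as ! i = bs ! i"
    if "cmap (J \<phi> \<Sigma>) as \<Gamma> \<Delta>" "cmap (J \<phi> \<Sigma>) bs \<Gamma> \<Delta>"
      "\<forall>i < length \<Delta>. fst (\<Delta> ! i) \<in> TV \<Delta> \<longrightarrow> as ! i = bs ! i" "i < length \<Delta>" for \<Gamma> as bs i
    using distinct_OV_if_Ctx[OF assms(2,4)]
  proof (rule entries_determined_by_top_vars[where E = "\<lambda>a A. El \<Gamma> a A \<in> J \<phi> \<Sigma>"])
    show "length as = length \<Delta>" "length bs = length \<Delta>" using that(1,2) by (simp_all add: cmap_def)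
    show "\<And>k A. k < length \<Delta> \<Longrightarrow> El \<Gamma> (as ! k) A \<in> J \<phi> \<Sigma> \<Longrightarrow> A = inst_entry \<Delta> as k"
      using that(1) unique unfolding cmap_def by blast
    show "\<And>k. k < length \<Delta> \<Longrightarrow> El \<Gamma> (bs ! k) (inst_entry \<Delta> bs k) \<in> J \<phi> \<Sigma>"
      using that(2) unfolding cmap_def by blast
  qed (use that(3,4) in auto)
  then show ?thesis using unique by blast
qed

end
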